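(* Let $\underline d=(1,d_1,\dots,d_r)$ and let $I_{r+1}\subset\cdots\subset I_1\subset I_0=\mathbb{C}[x_1,\dots,x_n]$ be a flag of monomial ideals with $\dim I_k/I_{k+1}=d_k$, with corresponding flag of partitions $\lambda_1\subset\lambda_2\subset\cdots\subset\lambda_{r+1}\subset\mathbb{Z}^n_{\ge0}$. Then the corresponding fixed point of $\mathrm{NHilb}^{\underline d}(\mathbb{A}^n)$ lies in $\mathrm{NHilb}^{\underline d}_{\mathrm{nil\text{-}fil}}(\mathbb{A}^n)$ if and only if for all $k\ge1$, all $\mathbf u\in\lambda_{k+1}\setminus\lambda_k$ and all $i=1,\dots,n$ we have $\mathbf u+e_i\notin\lambda_{k+1}$.
   Context: $\lambda_k$ is the set of exponents $\mathbf u\in\mathbb{Z}^n_{\ge0}$ with $x^{\mathbf u}\notin I_k$. $\mathrm{NHilb}^{\underline d}_{\mathrm{nil\text{-}fil}}(\mathbb{A}^n)$, the nilpotently filtered locus, is the locus of flags of ideals $I_{r+1}\subset\cdots\subset I_1\subset I_0=\mathbb{C}[x_1,\dots,x_n]$ with $\dim I_k/I_{k+1}=d_k$ such that $I_1=\mathfrak m=(x_1,\dots,x_n)$ and $I_1\cdot I_k\subset I_{k+1}$ for all $k$. $e_i$ is the $i$-th unit vector. *)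

theory Defs
  imports Complex_Main "HOL-Library.Poly_Mapping"
begin

(* Polynomial ring C[x_i : i in 'n] for a finite variable type 'n (n = CARD('n)).
  Exponent vectors u in Z_{>=0}^n are 'n =>0 nat; a polynomial maps exponents to coefficients. *)
type_synonym 'n cpoly = "('n \<Rightarrow>\<^sub>0 nat) \<Rightarrow>\<^sub>0 complex"

definition xmono :: "('n \<Rightarrow>\<^sub>0 nat) \<Rightarrow> 'n cpoly" where
  "xmono u = Poly_Mapping.single u 1"

definition const :: "complex \<Rightarrow> 'n cpoly" where
  "const c = Poly_Mapping.single 0 c"

definition is_ideal :: "'n cpoly set \<Rightarrow> bool" where
  "is_ideal I \<longleftrightarrow> 0 \<in> I \<and> (\<forall>f\<in>I. \<forall>g\<in>I. f + g \<in> I) \<and> (\<forall>f\<in>I. \<forall>h. h * f \<in> I)"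

definition ideal_gen :: "'n cpoly set \<Rightarrow> 'n cpoly set" where
  "ideal_gen S = \<Inter>{J. is_ideal J \<and> S \<subseteq> J}"

definition monomial_ideal :: "'n cpoly set \<Rightarrow> bool" where
  "monomial_ideal I \<longleftrightarrow> is_ideal I \<and> (\<exists>S. I = ideal_gen (xmono ` S))"

definition max_ideal :: "'n cpoly set" where
  "max_ideal = ideal_gen {xmono (Poly_Mapping.single i 1) | i. True}"

(* dim_C (I/J) = d, for J \<subseteq> I: there is a family of d elements of I whose classes form a
  C-basis of I/J. *)
definition quot_dim :: "'n cpoly set \<Rightarrow> 'n cpoly set \<Rightarrow> nat \<Rightarrow> bool" where
  "quot_dim I J d \<longleftrightarrow> (\<exists>B. finite B \<and> card B = d \<and> B \<subseteq> I \<and>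
     (\<forall>c. (\<Sum>b\<in>B. const (c b) * b) \<in> J \<longrightarrow> (\<forall>b\<in>B. c b = 0)) \<and>
     (\<forall>f\<in>I. \<exists>c. f - (\<Sum>b\<in>B. const (c b) * b) \<in> J))"

(* lambda_k: exponents of monomials not in I_k. *)
definition lam :: "'n cpoly set \<Rightarrow> ('n \<Rightarrow>\<^sub>0 nat) set" where
  "lam I = {u. xmono u \<notin> I}"

definition is_flag :: "nat \<Rightarrow> (nat \<Rightarrow> nat) \<Rightarrow> (nat \<Rightarrow> 'n cpoly set) \<Rightarrow> bool" where
  "is_flag r d I \<longleftrightarrow> d 0 = 1 \<and> I 0 = UNIV \<and> (\<forall>k\<le>r+1. is_ideal (I k)) \<and>
     (\<forall>k\<le>r. I (Suc k) \<subseteq> I k \<and> quot_dim (I k) (I (Suc k)) (d k))"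

definition nil_filtered :: "nat \<Rightarrow> (nat \<Rightarrow> 'n cpoly set) \<Rightarrow> bool" where
  "nil_filtered r I \<longleftrightarrow> I 1 = max_ideal \<and>
     (\<forall>k\<le>r. ideal_gen {a * b | a b. a \<in> I 1 \<and> b \<in> I k} \<subseteq> I (Suc k))"

end

theory Submission
  imports Defs
begin

(* A monomial ideal contains a polynomial iff it contains every monomial of its support, so it
  is determined by the monomials it contains. Since I_0 is the whole ring and d_0 = 1, the
  monomial ideal I_1 has codimension one; two distinct monomials outside a monomial ideal are
  linearly independent modulo it, so I_1 misses only the monomial 1, i.e. I_1 = m. Hence the
  condition m I_k \<subseteq> I_(k+1) only has to be tested on the products x_i x^u with x^u \<in> I_k, and
  those with x^u \<in> I_(k+1) lie in I_(k+1) anyway. *)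

lemma poly_mapping_sum_singles:
  "(\<Sum>u\<in>Poly_Mapping.keys f. Poly_Mapping.single u (Poly_Mapping.lookup f u))
     = (f :: 'a \<Rightarrow>\<^sub>0 'b::comm_monoid_add)"
  by (rule poly_mapping_eqI)
    (auto simp: lookup_sum lookup_single when_def in_keys_iff split: if_splits)

lemma exists_single_add_if_nonzero:
  assumes "(u :: 'a \<Rightarrow>\<^sub>0 nat) \<noteq> 0"
  obtains i v where "u = Poly_Mapping.single i 1 + v"
proof -
  obtain i where "Poly_Mapping.lookup u i \<noteq> 0"
    using assms by (metis lookup_zero poly_mapping_eqI)
  then have "u = Poly_Mapping.single i 1 + (u - Poly_Mapping.single i 1)"
    by (intro poly_mapping_eqI) (auto simp: lookup_add lookup_minus lookup_single when_def)
  then show thesis by (rule that)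
qed

lemma single_add_nonzero: "Poly_Mapping.single i 1 + (v :: 'a \<Rightarrow>\<^sub>0 nat) \<noteq> 0"
  by (metis add_is_0 lookup_add lookup_single_eq lookup_zero one_neq_zero)

lemma xmono_zero: "xmono 0 = 1"
  by (simp add: xmono_def)

lemma xmono_mult: "xmono u * xmono v = xmono (u + v)"
  by (simp add: xmono_def mult_single)

lemma const_mult_xmono: "const c * xmono u = Poly_Mapping.single u c"
  by (simp add: xmono_def const_def mult_single)

lemma lookup_xmono: "Poly_Mapping.lookup (xmono u) w = (if u = w then 1 else 0)"
  by (simp add: xmono_def lookup_single when_def)

lemma lookup_const_mult: "Poly_Mapping.lookup (const c * f) u = c * Poly_Mapping.lookup f u"
  unfolding const_def mult_map_scale_conv_mult[symmetric]
  by (simp add: Poly_Mapping.map.rep_eq when_def)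

lemma ideal_mult_left: "is_ideal J \<Longrightarrow> f \<in> J \<Longrightarrow> h * f \<in> J"
  unfolding is_ideal_def by blast

lemma ideal_sum: "is_ideal J \<Longrightarrow> (\<And>a. a \<in> A \<Longrightarrow> g a \<in> J) \<Longrightarrow> sum g A \<in> J"
  by (induction A rule: infinite_finite_induct) (auto simp: is_ideal_def)

lemma ideal_eq_UNIV_if_one_mem:
  assumes "is_ideal J" "1 \<in> J"
  shows "J = UNIV"
  using ideal_mult_left[OF assms] by (metis UNIV_eq_I mult.right_neutral)

lemma ideal_mem_if_monomials_mem:
  assumes "is_ideal J" "\<forall>u\<in>Poly_Mapping.keys f. xmono u \<in> J"
  shows "f \<in> J"
proof -
  have "(\<Sum>u\<in>Poly_Mapping.keys f. const (Poly_Mapping.lookup f u) * xmono u) \<in> J"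
    using assms by (intro ideal_sum ideal_mult_left) auto
  then show ?thesis
    by (simp add: const_mult_xmono poly_mapping_sum_singles)
qed

lemma ideal_gen_least: "is_ideal J \<Longrightarrow> T \<subseteq> J \<Longrightarrow> ideal_gen T \<subseteq> J"
  unfolding ideal_gen_def by blast

lemma ideal_gen_superset: "T \<subseteq> ideal_gen T"
  unfolding ideal_gen_def by blast

lemma is_ideal_ideal_gen: "is_ideal (ideal_gen T)"
  unfolding ideal_gen_def is_ideal_def by blast

lemma ideal_gen_mult_subset_left:
  assumes "is_ideal J"
  shows "ideal_gen {a * b | a b. a \<in> J \<and> b \<in> K} \<subseteq> J"
proof (rule ideal_gen_least[OF assms], safe)
  fix a b assume "a \<in> J"
  then have "b * a \<in> J" by (rule ideal_mult_left[OF assms])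
  then show "a * b \<in> J" by (simp add: mult.commute)
qed

definition divisible_support :: "('n \<Rightarrow>\<^sub>0 nat) set \<Rightarrow> 'n cpoly set" where
  "divisible_support S = {f. \<forall>u\<in>Poly_Mapping.keys f. \<exists>s\<in>S. \<exists>v. u = s + v}"

lemma is_ideal_divisible_support: "is_ideal (divisible_support S)"
proof -
  have "h * f \<in> divisible_support S" if f: "f \<in> divisible_support S" for f h
  proof -
    have "\<exists>s\<in>S. \<exists>v. u = s + v" if u: "u \<in> Poly_Mapping.keys (h * f)" for u
    proof -
      obtain a b where ab: "u = a + b" "b \<in> Poly_Mapping.keys f"
        using u keys_mult[of h f] by blast
      then obtain s v where "s \<in> S" "b = s + v"
        using f unfolding divisible_support_def by blast
      then have "s \<in> S \<and> u = s + (a + v)"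
        using ab by (simp add: add_ac)
      then show ?thesis by blast
    qed
    then show ?thesis unfolding divisible_support_def by blast
  qed
  moreover have "f + g \<in> divisible_support S"
    if "f \<in> divisible_support S" "g \<in> divisible_support S" for f g
    using that keys_add[of f g] unfolding divisible_support_def by blast
  moreover have "0 \<in> divisible_support S"
    by (simp add: divisible_support_def)
  ultimately show ?thesis
    unfolding is_ideal_def by blast
qed

lemma ideal_gen_xmono_subset_divisible_support:
  "ideal_gen (xmono ` S) \<subseteq> divisible_support S"
  by (rule ideal_gen_least[OF is_ideal_divisible_support])
    (auto simp: divisible_support_def xmono_def, metis add.right_neutral)

lemma xmono_mem_ideal_gen_iff:
  "xmono u \<in> ideal_gen (xmono ` S) \<longleftrightarrow> (\<exists>s\<in>S. \<exists>v. u = s + v)"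
proof
  assume "xmono u \<in> ideal_gen (xmono ` S)"
  moreover have "u \<in> Poly_Mapping.keys (xmono u)"
    by (simp add: xmono_def)
  ultimately show "\<exists>s\<in>S. \<exists>v. u = s + v"
    using ideal_gen_xmono_subset_divisible_support unfolding divisible_support_def by blast
next
  assume "\<exists>s\<in>S. \<exists>v. u = s + v"
  then obtain s v where "s \<in> S" "u = s + v" by blast
  then have "xmono v * xmono s \<in> ideal_gen (xmono ` S)"
    using ideal_gen_superset by (blast intro: ideal_mult_left is_ideal_ideal_gen)
  then show "xmono u \<in> ideal_gen (xmono ` S)"
    by (simp add: xmono_mult \<open>u = s + v\<close> add.commute)
qed

lemma monomial_ideal_mem_iff:
  assumes "monomial_ideal I"
  shows "f \<in> I \<longleftrightarrow> (\<forall>u\<in>Poly_Mapping.keys f. xmono u \<in> I)"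
proof
  from assms obtain S where I: "I = ideal_gen (xmono ` S)"
    unfolding monomial_ideal_def by blast
  assume "f \<in> I"
  then have "f \<in> divisible_support S"
    using I ideal_gen_xmono_subset_divisible_support by blast
  then show "\<forall>u\<in>Poly_Mapping.keys f. xmono u \<in> I"
    unfolding divisible_support_def by (auto simp: I xmono_mem_ideal_gen_iff)
next
  assume "\<forall>u\<in>Poly_Mapping.keys f. xmono u \<in> I"
  then show "f \<in> I"
    using assms ideal_mem_if_monomials_mem unfolding monomial_ideal_def by blast
qed

lemma monomial_ideal_eqI:
  assumes "monomial_ideal I" "monomial_ideal J" "lam I = lam J"
  shows "I = J"
proof (rule set_eqI)
  fix f
  have "xmono u \<in> I \<longleftrightarrow> xmono u \<in> J" for u
    using assms(3) unfolding lam_def by blast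
  then show "f \<in> I \<longleftrightarrow> f \<in> J"
    unfolding monomial_ideal_mem_iff[OF assms(1), of f] monomial_ideal_mem_iff[OF assms(2), of f]
    by simp
qed

lemma monomial_ideal_lookup_eq_0:
  "monomial_ideal I \<Longrightarrow> f \<in> I \<Longrightarrow> u \<in> lam I \<Longrightarrow> Poly_Mapping.lookup f u = 0"
  using monomial_ideal_mem_iff[of I f] by (auto simp: lam_def in_keys_iff)

lemma monomial_ideal_mult_mem:
  assumes "monomial_ideal B"
    and "\<And>p q. p \<in> Poly_Mapping.keys a \<Longrightarrow> q \<in> Poly_Mapping.keys b \<Longrightarrow> xmono (p + q) \<in> B"
  shows "a * b \<in> B"
  unfolding monomial_ideal_mem_iff[OF assms(1), of "a * b"]
  using keys_mult[of a b] assms(2) by blast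

lemma max_ideal_eq_ideal_gen: "max_ideal = ideal_gen (xmono ` range (\<lambda>i. Poly_Mapping.single i 1))"
  unfolding max_ideal_def by (rule arg_cong[where f = ideal_gen]) blast

lemma monomial_ideal_max_ideal: "monomial_ideal max_ideal"
  unfolding monomial_ideal_def max_ideal_eq_ideal_gen by (blast intro: is_ideal_ideal_gen)

lemma xmono_mem_max_ideal_iff: "xmono u \<in> max_ideal \<longleftrightarrow> u \<noteq> 0"
proof
  assume "xmono u \<in> max_ideal"
  then obtain i v where "u = Poly_Mapping.single i 1 + v"
    unfolding max_ideal_eq_ideal_gen xmono_mem_ideal_gen_iff by blast
  then show "u \<noteq> 0"
    using single_add_nonzero by simp
next
  assume "u \<noteq> 0"
  then obtain i v where "u = Poly_Mapping.single i 1 + v"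
    by (rule exists_single_add_if_nonzero)
  then show "xmono u \<in> max_ideal"
    unfolding max_ideal_eq_ideal_gen xmono_mem_ideal_gen_iff by blast
qed

lemma is_ideal_max_ideal: "is_ideal max_ideal"
  unfolding max_ideal_def by (rule is_ideal_ideal_gen)

lemma lam_max_ideal: "lam max_ideal = {0}"
  using xmono_mem_max_ideal_iff unfolding lam_def by blast

text \<open>If x^u - c b and x^v - c' b lie in J for distinct u, v outside J, comparing the
  coefficients of x^u and x^v gives c b_u = 1, c b_v = 0 and c' b_v = 1.\<close>

lemma lam_subsingleton_if_cyclic_quotient:
  assumes J: "monomial_ideal J" and span: "\<And>f. \<exists>c. f - const c * b \<in> J"
    and "u \<in> lam J" "v \<in> lam J"
  shows "u = v"
proof (rule ccontr)
  assume "u \<noteq> v"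
  obtain c where c: "xmono u - const c * b \<in> J" using span by blast
  obtain c' where c': "xmono v - const c' * b \<in> J" using span by blast
  have "1 - c * Poly_Mapping.lookup b u = 0"
    using monomial_ideal_lookup_eq_0[OF J c \<open>u \<in> lam J\<close>]
    by (simp add: lookup_minus lookup_const_mult lookup_xmono)
  moreover have "c * Poly_Mapping.lookup b v = 0"
    using monomial_ideal_lookup_eq_0[OF J c \<open>v \<in> lam J\<close>] \<open>u \<noteq> v\<close>
    by (simp add: lookup_minus lookup_const_mult lookup_xmono)
  moreover have "1 - c' * Poly_Mapping.lookup b v = 0"
    using monomial_ideal_lookup_eq_0[OF J c' \<open>v \<in> lam J\<close>]
    by (simp add: lookup_minus lookup_const_mult lookup_xmono)
  ultimately show False by auto
qed

lemma monomial_ideal_codim_one_eq_max_ideal: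
  assumes J: "monomial_ideal J" and "quot_dim UNIV J 1"
  shows "J = max_ideal"
proof -
  obtain B where card_B: "card B = 1"
    and indep_B: "\<forall>c. (\<Sum>b\<in>B. const (c b) * b) \<in> J \<longrightarrow> (\<forall>b\<in>B. c b = 0)"
    and span_B: "\<forall>f. \<exists>c. f - (\<Sum>b\<in>B. const (c b) * b) \<in> J"
    using assms(2) unfolding quot_dim_def by blast
  obtain b where B: "B = {b}"
    using card_B card_1_singletonE by blast
  have span: "\<exists>c. f - const c * b \<in> J" for f
  proof -
    obtain c where "f - (\<Sum>b\<in>B. const (c b) * b) \<in> J"
      using span_B by blast
    then have "f - const (c b) * b \<in> J"
      by (simp add: B)
    then show ?thesis ..
  qed
  have "(\<Sum>b\<in>B. const 1 * b) \<notin> J"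
    using indep_B B by auto
  then have "J \<noteq> UNIV"
    by blast
  moreover have "is_ideal J"
    using J unfolding monomial_ideal_def by blast
  ultimately have "0 \<in> lam J"
    using ideal_eq_UNIV_if_one_mem unfolding lam_def by (metis mem_Collect_eq xmono_zero)
  then have "lam J = {0}"
    using lam_subsingleton_if_cyclic_quotient[OF J span] by blast
  then show ?thesis
    using monomial_ideal_eqI[OF J monomial_ideal_max_ideal] by (simp add: lam_max_ideal)
qed

lemma flag_first_ideal_eq_max_ideal:
  assumes "is_flag r d I" "monomial_ideal (I 1)"
  shows "I 1 = max_ideal"
proof -
  have "quot_dim UNIV (I 1) 1"
    using assms(1) unfolding is_flag_def by (metis One_nat_def le0)
  then show ?thesis
    using assms(2) by (rule monomial_ideal_codim_one_eq_max_ideal[rotated])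
qed

lemma ideal_gen_max_ideal_mult_subsetD:
  assumes "ideal_gen {a * b | a b. a \<in> max_ideal \<and> b \<in> A} \<subseteq> B" "u \<in> lam B - lam A"
  shows "u + Poly_Mapping.single i 1 \<notin> lam B"
proof -
  have "xmono u \<in> A"
    using assms(2) unfolding lam_def by blast
  moreover have "xmono (Poly_Mapping.single i 1) \<in> max_ideal"
    using single_add_nonzero[of i 0] by (simp add: xmono_mem_max_ideal_iff)
  ultimately have "xmono (Poly_Mapping.single i 1) * xmono u \<in> {a * b | a b. a \<in> max_ideal \<and> b \<in> A}"
    by blast
  then have "xmono (Poly_Mapping.single i 1) * xmono u \<in> B"
    by (rule subsetD[OF assms(1) subsetD[OF ideal_gen_superset]])
  then show ?thesis
    unfolding lam_def by (simp add: xmono_mult add.commute)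
qed

lemma ideal_gen_max_ideal_mult_subsetI:
  assumes A: "monomial_ideal (A :: 'n cpoly set)" and B: "monomial_ideal B"
    and closed: "\<And>u i. u \<in> lam B - lam A \<Longrightarrow> u + Poly_Mapping.single i 1 \<notin> lam B"
  shows "ideal_gen {a * b | a b. a \<in> max_ideal \<and> b \<in> A} \<subseteq> B"
proof -
  have idB: "is_ideal B"
    using B unfolding monomial_ideal_def by blast
  have step: "xmono (q + Poly_Mapping.single i 1) \<in> B" if "xmono q \<in> A" for q i
  proof (cases "xmono q \<in> B")
    case True
    then have "xmono (Poly_Mapping.single i 1) * xmono q \<in> B"
      by (rule ideal_mult_left[OF idB])
    then show ?thesis
      by (simp add: xmono_mult add.commute)
  next
    case False
    then have "q \<in> lam B - lam A"
      using that unfolding lam_def by blast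
    then have "q + Poly_Mapping.single i 1 \<notin> lam B"
      by (rule closed)
    then show ?thesis
      unfolding lam_def by simp
  qed
  show ?thesis
  proof (rule ideal_gen_least[OF idB], safe)
    fix a b :: "'n cpoly"
    assume a: "a \<in> max_ideal" and b: "b \<in> A"
    show "a * b \<in> B"
    proof (rule monomial_ideal_mult_mem[OF B])
      fix p q assume p: "p \<in> Poly_Mapping.keys a" and q: "q \<in> Poly_Mapping.keys b"
      have "xmono p \<in> max_ideal"
        using a p monomial_ideal_mem_iff[OF monomial_ideal_max_ideal, of a] by blast
      then have "p \<noteq> 0"
        by (simp add: xmono_mem_max_ideal_iff)
      then obtain i p' where p': "p = Poly_Mapping.single i 1 + p'"
        by (rule exists_single_add_if_nonzero)
      have "xmono q \<in> A"
        using b q monomial_ideal_mem_iff[OF A, of b] by blast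
      then have "xmono p' * xmono (q + Poly_Mapping.single i 1) \<in> B"
        by (intro ideal_mult_left[OF idB] step)
      then show "xmono (p + q) \<in> B"
        by (simp add: xmono_mult p' add_ac)
    qed
  qed
qed

lemma ideal_gen_max_ideal_mult_subset_iff:
  assumes "monomial_ideal A" "monomial_ideal B"
  shows "ideal_gen {a * b | a b. a \<in> max_ideal \<and> b \<in> A} \<subseteq> B \<longleftrightarrow>
    (\<forall>u \<in> lam B - lam A. \<forall>i. u + Poly_Mapping.single i 1 \<notin> lam B)"
proof
  show "\<forall>u \<in> lam B - lam A. \<forall>i. u + Poly_Mapping.single i 1 \<notin> lam B"
    if "ideal_gen {a * b | a b. a \<in> max_ideal \<and> b \<in> A} \<subseteq> B"
    using ideal_gen_max_ideal_mult_subsetD[OF that] by blast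
qed (use ideal_gen_max_ideal_mult_subsetI[OF assms] in blast)

lemma nil_filtered_iff_max_ideal_mult_subset:
  assumes I1: "I 1 = max_ideal"
  shows "nil_filtered r I \<longleftrightarrow>
    (\<forall>k\<in>{1..r}. ideal_gen {a * b | a b. a \<in> max_ideal \<and> b \<in> I k} \<subseteq> I (Suc k))"
    (is "_ \<longleftrightarrow> (\<forall>k\<in>{1..r}. ?mult_subset k)")
proof -
  have all_le_iff: "(\<forall>k\<le>r. Q k) \<longleftrightarrow> (\<forall>k\<in>{1..r}. Q k)" if "Q 0" for Q
    using that by (auto simp: Suc_le_eq)
  have "?mult_subset 0"
    using ideal_gen_mult_subset_left[OF is_ideal_max_ideal] I1 by simp
  then show ?thesis
    unfolding nil_filtered_def I1 all_le_iff[of ?mult_subset, OF \<open>?mult_subset 0\<close>] by simp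
qed

theorem mainTheorem19:
  fixes r :: nat and d :: "nat \<Rightarrow> nat" and I :: "nat \<Rightarrow> ('n::finite) cpoly set"
  assumes "is_flag r d I"
    and "\<forall>k\<le>r+1. monomial_ideal (I k)"
  shows "nil_filtered r I \<longleftrightarrow>
    (\<forall>k\<in>{1..r}. \<forall>u \<in> lam (I (Suc k)) - lam (I k). \<forall>i::'n.
        u + Poly_Mapping.single i 1 \<notin> lam (I (Suc k)))"
proof -
  have "I 1 = max_ideal"
    using flag_first_ideal_eq_max_ideal[OF assms(1)] assms(2) by simp
  then have "nil_filtered r I \<longleftrightarrow>
      (\<forall>k\<in>{1..r}. ideal_gen {a * b | a b. a \<in> max_ideal \<and> b \<in> I k} \<subseteq> I (Suc k))"
    by (rule nil_filtered_iff_max_ideal_mult_subset)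
  also have "\<dots> \<longleftrightarrow> (\<forall>k\<in>{1..r}. \<forall>u \<in> lam (I (Suc k)) - lam (I k). \<forall>i::'n.
        u + Poly_Mapping.single i 1 \<notin> lam (I (Suc k)))"
    using assms(2) by (intro ball_cong refl ideal_gen_max_ideal_mult_subset_iff) auto
  finally show ?thesis .
qed

end
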